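(* At any point during the execution of the Part I procedure, let $B$ be a blossom (node of the search structure $S$) with base $b$, and let $v$ be a vertex of $B$. Then $b$ lies on the canonical path of $v$, and the subpath of the canonical path of $v$ that starts in $b$ and ends in $v$ has length $\mathrm{lcp}(v)-\mathrm{lcp}(b)$.
   Context: Let $G=(V,E)$ be a finite undirected graph with $n$ vertices and $M$ a matching in $G$. A vertex is free if no edge of $M$ is incident to it; for a matched vertex $v$, $\mathit{mate}(v)$ is its partner. An alternating path is a simple path whose edges alternate between $E\setminus M$ and $M$; an augmenting path is an alternating path connecting two distinct free vertices; a shortest augmenting path is called a sap. For a vertex $v$, $\mathrm{Lcp}(v)$ (resp. $\mathrm{Lcp}_{\mathrm{odd}}(v)$) denotes the minimum length of an even-length (resp. odd-length) alternating path in $G$ from a free vertex to $v$ ($\infty$ if none). The Part I procedure maintains a search structure $S$: a forest whose nodes are either single (odd) vertices or blossoms (disjoint vertex sets with a distinguished vertex, the base); each tree is rooted at a blossom containing a free vertex. Vertices in $S$ are labelled even (those in blossoms) or odd; vertices not in $S$ are unlabelled. A vertex is born even/odd according to the label it receives when inserted. The procedure maintains $\mathrm{lcp}(v)$ for even vertices and $\mathrm{lcp}_{\mathrm{odd}}(v)$ for vertices born odd. The blossom nodes currently in $S$ are the maximal blossoms. Phase $0$: every free vertex becomes the root of its own tree as a trivial blossom $\{v\}$ with base $v$, labelled even, $\mathrm{lcp}(v)=0$. Then for $\Delta=1,2,\dots$, phase $\Delta$ does: (i) if $\Delta$ is even, growth steps: while some even vertex $v$ with $\mathrm{lcp}(v)=\Delta-2$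 has a neighbour $x$ not in $S$ (such $x$ is matched), add $x$ as an odd child of the blossom containing $v$ with $\mathrm{lcp}_{\mathrm{odd}}(x)=\Delta-1$, and add $\mathit{mate}(x)$ as a child of $x$, as a trivial even blossom with $\mathrm{lcp}(\mathit{mate}(x))=\Delta$; (ii) bridge steps: while there is a non-matching edge $xy$ with $x,y$ even, lying in different maximal blossoms $B_x,B_y$, and $\mathrm{lcp}(x)+\mathrm{lcp}(y)=2\Delta-2$: if $B_x,B_y$ lie in different trees, the procedure stops ("an augmenting path is found in phase $\Delta$"); otherwise let $B$ be the lowest common ancestor of $B_x$ and $B_y$ in their tree (a blossom). Every odd vertex $z$ on the tree path from $B_x$ to $B$ or from $B_y$ to $B$ becomes even with $\mathrm{lcp}(z)=\mathrm{lcp}(x)+1+\mathrm{lcp}(y)-\mathrm{lcp}_{\mathrm{odd}}(z)$, and $B$ together with all blossoms and odd vertices on both tree paths is merged into one new blossom with the base of $B$ as its base, which takes the place of $B$ in the tree (children of merged nodes become its children); $xy$ is the bridge of the new blossom. Canonical paths: a free root vertex has the trivial path; in a growth step from $v$ to $x$, the canonical path of $x$ is that of $v$ followed by $vx$, and that of $\mathit{mate}(x)$ is that of $x$ followed by $x\,\mathit{mate}(x)$; in a bridge step, for an odd vertex $z$ on the path from $B_y$ to $B$ the new canonical path of $z$ is the canonical path of $x$, then the edge $xy$, then the reversal of the subpath of the canonical path of $y$ from $z$ to $y$ (symmetrically with $x,y$ exchanged for $z$ on the path from $B_x$ to $B$). *)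

theory Defs
  imports Main
begin

definition graph_matching :: "'v set \<Rightarrow> 'v set set \<Rightarrow> 'v set set \<Rightarrow> bool" where
  "graph_matching V E M \<longleftrightarrow> finite V
     \<and> E \<subseteq> {{a, b} | a b. a \<in> V \<and> b \<in> V \<and> a \<noteq> b}
     \<and> M \<subseteq> E
     \<and> (\<forall>e\<in>M. \<forall>f\<in>M. e \<noteq> f \<longrightarrow> e \<inter> f = {})"

definition free_vertex :: "'v set \<Rightarrow> 'v set set \<Rightarrow> 'v \<Rightarrow> bool" where
  "free_vertex V M v \<longleftrightarrow> v \<in> V \<and> (\<forall>e\<in>M. v \<notin> e)"

text \<open>Nodes of the search structure are vertex sets: the maximal blossoms (blos)
  and the singletons of odd vertices. par is the parent map of the forest,
  base the base of a blossom, lcp / lcpo the maintained values lcp and lcp_odd,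
  cp v the canonical path of v (as a vertex list starting in a free vertex and
  ending in v), phase the current phase Delta, bridging tells whether the
  current phase has finished its growth steps and is performing bridge steps.\<close>

record 'v pstate =
  blos :: "'v set set"
  odds :: "'v set"
  par :: "'v set \<Rightarrow> 'v set option"
  base :: "'v set \<Rightarrow> 'v"
  lcp :: "'v \<Rightarrow> int"
  lcpo :: "'v \<Rightarrow> int"
  cp :: "'v \<Rightarrow> 'v list"
  phase :: nat
  bridging :: bool

definition evens :: "('v, 'a) pstate_scheme \<Rightarrow> 'v set" where
  "evens s = \<Union> (blos s)"

definition inS :: "('v, 'a) pstate_scheme \<Rightarrow> 'v \<Rightarrow> bool" where
  "inS s x \<longleftrightarrow> x \<in> evens s \<or> x \<in> odds s"

definition nodes :: "('v, 'a) pstate_scheme \<Rightarrow> 'v set set" where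
  "nodes s = blos s \<union> (\<lambda>z. {z}) ` odds s"

definition anc :: "('v, 'a) pstate_scheme \<Rightarrow> 'v set \<Rightarrow> 'v set \<Rightarrow> bool" where
  "anc s A C \<longleftrightarrow> (A, C) \<in> {(N, P). N \<in> nodes s \<and> par s N = Some P}\<^sup>*"

definition init_state :: "'v set \<Rightarrow> 'v set set \<Rightarrow> 'v pstate" where
  "init_state V M = \<lparr> blos = {{v} | v. free_vertex V M v}, odds = {},
     par = (\<lambda>_. None), base = the_elem, lcp = (\<lambda>_. 0), lcpo = (\<lambda>_. 0),
     cp = (\<lambda>v. [v]), phase = 1, bridging = False \<rparr>"

definition growth_possible :: "'v set set \<Rightarrow> 'v pstate \<Rightarrow> bool" where
  "growth_possible E s \<longleftrightarrow> even (phase s) \<and>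
     (\<exists>v x. v \<in> evens s \<and> lcp s v = int (phase s) - 2 \<and> {v, x} \<in> E \<and> \<not> inS s x)"

definition grow_step :: "'v set set \<Rightarrow> 'v set set \<Rightarrow> 'v pstate \<Rightarrow> 'v pstate \<Rightarrow> bool" where
  "grow_step E M s s' \<longleftrightarrow> (\<exists>v x m Bv.
     \<not> bridging s \<and> even (phase s) \<and> Bv \<in> blos s \<and> v \<in> Bv
     \<and> lcp s v = int (phase s) - 2 \<and> {v, x} \<in> E \<and> \<not> inS s x \<and> {x, m} \<in> M
     \<and> s' = s\<lparr> odds := insert x (odds s), blos := insert {m} (blos s),
               par := (par s)({x} := Some Bv, {m} := Some {x}),
               base := (base s)({m} := m),
               lcpo := (lcpo s)(x := int (phase s) - 1),
               lcp := (lcp s)(m := int (phase s)),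
               cp := (cp s)(x := cp s v @ [x], m := cp s v @ [x, m]) \<rparr>)"

definition bridge_edge :: "'v set set \<Rightarrow> 'v set set \<Rightarrow> 'v pstate \<Rightarrow> 'v \<Rightarrow> 'v \<Rightarrow> 'v set \<Rightarrow> 'v set \<Rightarrow> bool" where
  "bridge_edge E M s x y Bx By \<longleftrightarrow> {x, y} \<in> E \<and> {x, y} \<notin> M
     \<and> Bx \<in> blos s \<and> By \<in> blos s \<and> x \<in> Bx \<and> y \<in> By \<and> Bx \<noteq> By
     \<and> lcp s x + lcp s y = 2 * int (phase s) - 2"

definition merge :: "'v pstate \<Rightarrow> 'v \<Rightarrow> 'v \<Rightarrow> 'v set \<Rightarrow> 'v set \<Rightarrow> 'v set \<Rightarrow> 'v pstate" where
  "merge s x y Bx By B =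
    (let Px = {N. anc s Bx N \<and> anc s N B};
         Py = {N. anc s By N \<and> anc s N B};
         Q = Px \<union> Py;
         B' = \<Union> Q;
         Zx = {z \<in> odds s. {z} \<in> Px};
         Zy = {z \<in> odds s. {z} \<in> Py};
         Z = Zx \<union> Zy
     in s\<lparr> blos := insert B' (blos s - Q),
           odds := odds s - Z,
           par := (\<lambda>N. if N = B' then par s B
                       else if N \<in> Q then None
                       else map_option (\<lambda>P. if P \<in> Q then B' else P) (par s N)),
           base := (base s)(B' := base s B),
           lcp := (\<lambda>z. if z \<in> Z then lcp s x + 1 + lcp s y - lcpo s z else lcp s z),
           cp := (\<lambda>z. if z \<in> Zy then cp s x @ rev (dropWhile (\<lambda>w. w \<noteq> z) (cp s y))
                      else if z \<in> Zx then cp s y @ rev (dropWhile (\<lambda>w. w \<noteq> z) (cp s x))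
                      else cp s z) \<rparr>)"

definition bridge_step :: "'v set set \<Rightarrow> 'v set set \<Rightarrow> 'v pstate \<Rightarrow> 'v pstate \<Rightarrow> bool" where
  "bridge_step E M s s' \<longleftrightarrow> bridging s \<and> (\<exists>x y Bx By B.
     bridge_edge E M s x y Bx By
     \<and> anc s Bx B \<and> anc s By B
     \<and> (\<forall>C. anc s Bx C \<and> anc s By C \<longrightarrow> anc s B C)
     \<and> s' = merge s x y Bx By B)"

text \<open>Phase control: finish growth steps; finish the phase when no bridge edge exists.
  (If only bridge edges between different trees exist, the procedure stops: no step.)\<close>
definition end_growth :: "'v set set \<Rightarrow> 'v pstate \<Rightarrow> 'v pstate \<Rightarrow> bool" where
  "end_growth E s s' \<longleftrightarrow> \<not> bridging s \<and> \<not> growth_possible E s \<and> s' = s\<lparr> bridging := True \<rparr>"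

definition end_phase :: "'v set set \<Rightarrow> 'v set set \<Rightarrow> 'v pstate \<Rightarrow> 'v pstate \<Rightarrow> bool" where
  "end_phase E M s s' \<longleftrightarrow> bridging s \<and> \<not> (\<exists>x y Bx By. bridge_edge E M s x y Bx By)
     \<and> s' = s\<lparr> phase := Suc (phase s), bridging := False \<rparr>"

inductive reach :: "'v set \<Rightarrow> 'v set set \<Rightarrow> 'v set set \<Rightarrow> 'v pstate \<Rightarrow> bool"
  for V E M where
  reach_init: "reach V E M (init_state V M)"
| reach_grow: "reach V E M s \<Longrightarrow> grow_step E M s s' \<Longrightarrow> reach V E M s'"
| reach_bridge: "reach V E M s \<Longrightarrow> bridge_step E M s s' \<Longrightarrow> reach V E M s'"
| reach_end_growth: "reach V E M s \<Longrightarrow> end_growth E s s' \<Longrightarrow> reach V E M s'"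
| reach_end_phase: "reach V E M s \<Longrightarrow> end_phase E M s s' \<Longrightarrow> reach V E M s'"

end

theory Submission
  imports Defs
begin

text \<open>The theorem is read off an invariant of the search structure that every step preserves.
  Every node N of the forest (a maximal blossom, or the singleton of an odd vertex) has a base:
  the base of the blossom, or the odd vertex itself. The canonical path of the base of N is that
  of some vertex of the parent node extended by one edge (or trivial at a root), the canonical
  path of any vertex of N continues the one of the base of N inside N, canonical paths are
  simple, and lcp counts the edges of the canonical path.

  A growth step only attaches two singleton nodes. For a bridge step with bridge xy, the new
  canonical path of an odd vertex z on the tree path from By to the lowest common ancestor B is
  cp x followed by the reversed segment of cp y from z. That segment lies in the nodes between
  By and z, while cp x lies in the ancestors of Bx; a node common to both would be a common
  ancestor of Bx and By between {z} and B, hence equal to both B and {z}, which is impossible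
  as B is a blossom. Hence the new paths are simple, pass through the base of B and stay inside
  the new blossom, and their lengths match the new lcp values.\<close>

lemma dropWhile_neq_append_Cons:
  "z \<notin> set p \<Longrightarrow> dropWhile (\<lambda>w. w \<noteq> z) (p @ z # r) = z # r"
  by (induction p) auto

definition node_base :: "('v, 'a) pstate_scheme \<Rightarrow> 'v set \<Rightarrow> 'v" where
  "node_base s N = (if N \<in> blos s then base s N else the_elem N)"

definition parent_rel :: "('v, 'a) pstate_scheme \<Rightarrow> ('v set \<times> 'v set) set" where
  "parent_rel s = {(N, P). N \<in> nodes s \<and> par s N = Some P}"

lemma anc_iff_parent_rel: "anc s A C \<longleftrightarrow> (A, C) \<in> (parent_rel s)\<^sup>*"
  by (simp add: anc_def parent_rel_def)

lemma anc_refl: "anc s A A"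
  by (simp add: anc_def)

lemma anc_trans: "anc s A B \<Longrightarrow> anc s B C \<Longrightarrow> anc s A C"
  unfolding anc_iff_parent_rel by (rule rtrancl_trans)

lemma anc_parent: "N \<in> nodes s \<Longrightarrow> par s N = Some P \<Longrightarrow> anc s P C \<Longrightarrow> anc s N C"
  unfolding anc_iff_parent_rel by (rule converse_rtrancl_into_rtrancl) (simp add: parent_rel_def)

lemma node_vertex_inS: "N \<in> nodes s \<Longrightarrow> u \<in> N \<Longrightarrow> inS s u"
  by (auto simp: nodes_def inS_def evens_def)

locale search_structure =
  fixes M :: "'v set set" and s :: "'v pstate"
  assumes mate_closed: "{a, c} \<in> M \<Longrightarrow> inS s a \<Longrightarrow> inS s c"
    and blossoms_disjoint: "N \<in> blos s \<Longrightarrow> K \<in> blos s \<Longrightarrow> N \<noteq> K \<Longrightarrow> N \<inter> K = {}"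
    and evens_odds_disjoint: "evens s \<inter> odds s = {}"
    and base_in_blossom: "N \<in> blos s \<Longrightarrow> base s N \<in> N"
    and parent_in_nodes: "N \<in> nodes s \<Longrightarrow> par s N = Some P \<Longrightarrow> P \<in> nodes s"
    and cp_root: "N \<in> nodes s \<Longrightarrow> par s N = None \<Longrightarrow> cp s (node_base s N) = [node_base s N]"
    and cp_child: "N \<in> nodes s \<Longrightarrow> par s N = Some P \<Longrightarrow>
      \<exists>u\<in>P. cp s (node_base s N) = cp s u @ [node_base s N]"
    and cp_through_base: "N \<in> nodes s \<Longrightarrow> u \<in> N \<Longrightarrow>
      \<exists>r. cp s u = cp s (node_base s N) @ r \<and> set r \<subseteq> N"
    and lcp_eq_length: "u \<in> evens s \<Longrightarrow> lcp s u = int (length (cp s u)) - 1"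
    and lcpo_eq_length: "u \<in> odds s \<Longrightarrow> lcpo s u = int (length (cp s u)) - 1"
    and cp_distinct: "inS s u \<Longrightarrow> distinct (cp s u)"
    and odd_unique_child: "w \<in> odds s \<Longrightarrow> N \<in> nodes s \<Longrightarrow> N' \<in> nodes s \<Longrightarrow>
      par s N = Some {w} \<Longrightarrow> par s N' = Some {w} \<Longrightarrow> N = N'"
begin

lemma odd_singleton_not_blossom: "w \<in> odds s \<Longrightarrow> {w} \<notin> blos s"
  using evens_odds_disjoint by (auto simp: evens_def)

lemma nodes_disjoint: "N \<in> nodes s \<Longrightarrow> K \<in> nodes s \<Longrightarrow> N \<noteq> K \<Longrightarrow> N \<inter> K = {}"
  using blossoms_disjoint evens_odds_disjoint by (auto simp: nodes_def evens_def)

lemma node_base_in: "N \<in> nodes s \<Longrightarrow> node_base s N \<in> N"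
  using base_in_blossom by (auto simp: nodes_def node_base_def)

lemma node_nonempty: "N \<in> nodes s \<Longrightarrow> N \<noteq> {}"
  using node_base_in by blast

lemma cp_node_base_snoc: "N \<in> nodes s \<Longrightarrow> \<exists>p. cp s (node_base s N) = p @ [node_base s N]"
  using cp_root cp_child by (cases "par s N") fastforce+

text \<open>This is what makes the parent relation acyclic.\<close>

lemma parent_rel_cp_length:
  assumes "(N, P) \<in> parent_rel s"
  shows "length (cp s (node_base s P)) < length (cp s (node_base s N))"
proof -
  have N: "N \<in> nodes s" and p: "par s N = Some P" using assms by (auto simp: parent_rel_def)
  obtain u where u: "u \<in> P" "cp s (node_base s N) = cp s u @ [node_base s N]"
    using cp_child[OF N p] by auto
  obtain r where "cp s u = cp s (node_base s P) @ r"
    using cp_through_base[OF parent_in_nodes[OF N p] u(1)] by auto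
  then show ?thesis using u by simp
qed

lemma anc_in_nodes: "anc s N K \<Longrightarrow> N \<in> nodes s \<Longrightarrow> K \<in> nodes s"
  unfolding anc_iff_parent_rel
  by (induction rule: rtrancl_induct) (auto simp: parent_rel_def dest: parent_in_nodes)

lemma proper_anc_cp_length:
  "(N, K) \<in> (parent_rel s)\<^sup>+ \<Longrightarrow> length (cp s (node_base s K)) < length (cp s (node_base s N))"
  by (induction rule: trancl_induct) (auto dest: parent_rel_cp_length)

lemma anc_antisym: "anc s N K \<Longrightarrow> anc s K N \<Longrightarrow> N = K"
  unfolding anc_iff_parent_rel rtrancl_eq_or_trancl
  using proper_anc_cp_length by (metis less_asym)

lemma parent_not_anc: "N \<in> nodes s \<Longrightarrow> par s N = Some P \<Longrightarrow> \<not> anc s P N"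
  using anc_antisym anc_parent[OF _ _ anc_refl] parent_rel_cp_length
  by (fastforce simp: parent_rel_def)

lemma anc_cp_prefix:
  assumes "anc s N C" "N \<in> nodes s" "u \<in> N"
  shows "\<exists>r. cp s u = cp s (node_base s C) @ r \<and> set r \<subseteq> \<Union>{K. anc s N K \<and> anc s K C}"
  using assms(1)[unfolded anc_iff_parent_rel] assms(2,3)
proof (induction arbitrary: u rule: converse_rtrancl_induct)
  case base
  then show ?case using cp_through_base anc_refl by blast
next
  case (step N P)
  have N: "N \<in> nodes s" and p: "par s N = Some P"
    using step.hyps(1) by (auto simp: parent_rel_def)
  have NC: "anc s N C" using step.hyps unfolding anc_iff_parent_rel
    by (rule converse_rtrancl_into_rtrancl)
  obtain r1 where r1: "cp s u = cp s (node_base s N) @ r1" "set r1 \<subseteq> N"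
    using cp_through_base[OF N step.prems(2)] by blast
  obtain w where w: "w \<in> P" "cp s (node_base s N) = cp s w @ [node_base s N]"
    using cp_child[OF N p] by auto
  obtain r2 where r2: "cp s w = cp s (node_base s C) @ r2"
    "set r2 \<subseteq> \<Union>{K. anc s P K \<and> anc s K C}"
    using step.IH[OF parent_in_nodes[OF N p] w(1)] by blast
  have "N \<subseteq> \<Union>{K. anc s N K \<and> anc s K C}" using NC anc_refl[of s N] by blast
  moreover have "set r2 \<subseteq> \<Union>{K. anc s N K \<and> anc s K C}"
    using r2(2) anc_parent[OF N p] by blast
  ultimately have "set (r2 @ node_base s N # r1) \<subseteq> \<Union>{K. anc s N K \<and> anc s K C}"
    using r1(2) node_base_in[OF N] by auto
  then show ?case using r1(1) w(2) r2(1) by fastforce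
qed

lemma cp_subset_ancestors:
  "N \<in> nodes s \<Longrightarrow> u \<in> N \<Longrightarrow> set (cp s u) \<subseteq> \<Union>{K. anc s N K}"
proof (induction N arbitrary: u rule: measure_induct_rule[where f = "\<lambda>N. length (cp s (node_base s N))"])
  case (less N)
  obtain r where r: "cp s u = cp s (node_base s N) @ r" "set r \<subseteq> N"
    using cp_through_base[OF less.prems] by blast
  have N_anc: "N \<subseteq> \<Union>{K. anc s N K}" using anc_refl by blast
  show ?case
  proof (cases "par s N")
    case None
    then show ?thesis using cp_root[OF less.prems(1)] r N_anc node_base_in[OF less.prems(1)] by auto
  next
    case (Some P)
    obtain w where w: "w \<in> P" "cp s (node_base s N) = cp s w @ [node_base s N]"
      using cp_child[OF less.prems(1) Some] by auto
    have "(N, P) \<in> parent_rel s" using less.prems(1) Some by (simp add: parent_rel_def)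
    then have "set (cp s w) \<subseteq> \<Union>{K. anc s P K}"
      using less.IH parent_rel_cp_length parent_in_nodes[OF less.prems(1) Some] w(1) by blast
    also have "\<dots> \<subseteq> \<Union>{K. anc s N K}"
      using anc_parent[OF less.prems(1) Some] by blast
    finally show ?thesis using r w N_anc node_base_in[OF less.prems(1)] by auto
  qed
qed

lemma cp_inS:
  assumes "inS s u" "w \<in> set (cp s u)"
  shows "inS s w"
proof -
  obtain N where N: "N \<in> nodes s" "u \<in> N"
    using assms(1) unfolding inS_def nodes_def evens_def by blast
  obtain K where "anc s N K" "w \<in> K" using cp_subset_ancestors[OF N] assms(2) by blast
  then show ?thesis using node_vertex_inS[OF anc_in_nodes[OF _ N(1)]] by blast
qed

lemma last_step_to_odd:
  assumes "anc s A {w}" "A \<noteq> {w}"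
  obtains C where "anc s A C" "C \<in> nodes s" "par s C = Some {w}"
proof -
  have "(A, {w}) \<in> (parent_rel s)\<^sup>+"
    using assms unfolding anc_iff_parent_rel rtrancl_eq_or_trancl by blast
  then obtain C where "(A, C) \<in> (parent_rel s)\<^sup>*" "(C, {w}) \<in> parent_rel s"
    by (blast dest: tranclD2)
  then show thesis using that by (simp add: anc_iff_parent_rel parent_rel_def)
qed

lemma lca_is_blossom:
  assumes "Bx \<in> blos s" "By \<in> blos s" "anc s Bx B" "anc s By B"
    and lca: "\<And>C. anc s Bx C \<Longrightarrow> anc s By C \<Longrightarrow> anc s B C"
  shows "B \<in> blos s"
proof (rule ccontr)
  assume B: "B \<notin> blos s"
  have "B \<in> nodes s" using anc_in_nodes[OF assms(3)] assms(1) unfolding nodes_def by blast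
  then obtain w where w: "w \<in> odds s" "B = {w}" using B unfolding nodes_def by blast
  have "Bx \<noteq> B" "By \<noteq> B" using assms(1,2) B by auto
  then obtain Cx Cy where Cx: "anc s Bx Cx" "Cx \<in> nodes s" "par s Cx = Some {w}"
    and Cy: "anc s By Cy" "Cy \<in> nodes s" "par s Cy = Some {w}"
    using last_step_to_odd assms(3,4) unfolding w(2) by metis
  have "Cx = Cy" using odd_unique_child[OF w(1) Cx(2) Cy(2) Cx(3) Cy(3)] .
  then have "anc s B Cx" using lca Cx(1) Cy(1) by simp
  then show False using parent_not_anc[OF Cx(2,3)] w(2) by simp
qed

lemma dropWhile_cp_node_base:
  assumes "N \<in> nodes s" "inS s u" "cp s u = cp s (node_base s N) @ r"
  shows "dropWhile (\<lambda>w. w \<noteq> node_base s N) (cp s u) = node_base s N # r"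
proof -
  obtain p where p: "cp s (node_base s N) = p @ [node_base s N]"
    using cp_node_base_snoc[OF assms(1)] by blast
  then have "node_base s N \<notin> set p" using cp_distinct[OF assms(2)] assms(3) by simp
  then show ?thesis using assms(3) p by (simp add: dropWhile_neq_append_Cons)
qed

end

lemma search_structure_init: "search_structure M (init_state V M)"
proof -
  let ?s = "init_state V M"
  have nodes: "nodes ?s = {{v} | v. free_vertex V M v}"
    and evens: "evens ?s = {v. free_vertex V M v}"
    by (auto simp: init_state_def nodes_def evens_def)
  have inS: "inS ?s u \<longleftrightarrow> free_vertex V M u" for u
    unfolding inS_def evens by (simp add: init_state_def)
  have node_base: "N \<in> nodes ?s \<Longrightarrow> node_base ?s N = the_elem N" for N
    by (simp add: node_base_def init_state_def)
  show ?thesis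
    by unfold_locales
      (auto simp: inS nodes evens node_base free_vertex_def, auto simp: init_state_def)
qed

lemma search_structure_phase_update:
  "search_structure M (s\<lparr>bridging := b\<rparr>) \<longleftrightarrow> search_structure M s"
  "search_structure M (s\<lparr>phase := n\<rparr>) \<longleftrightarrow> search_structure M s"
  by (simp_all add: search_structure_def nodes_def evens_def inS_def node_base_def anc_def)

locale grow_setting = search_structure +
  fixes v x m :: 'v and Bv :: "'v set"
  assumes matching: "e \<in> M \<Longrightarrow> f \<in> M \<Longrightarrow> e \<noteq> f \<Longrightarrow> e \<inter> f = {}"
    and Bv: "Bv \<in> blos s" and v_in_Bv: "v \<in> Bv"
    and x_not_inS: "\<not> inS s x" and xm_in_M: "{x, m} \<in> M" and x_ne_m: "x \<noteq> m"
    and lcp_v: "lcp s v = int (phase s) - 2"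
begin

definition grown :: "'v pstate" where
  "grown = s\<lparr> odds := insert x (odds s), blos := insert {m} (blos s),
     par := (par s)({x} := Some Bv, {m} := Some {x}),
     base := (base s)({m} := m),
     lcpo := (lcpo s)(x := int (phase s) - 1),
     lcp := (lcp s)(m := int (phase s)),
     cp := (cp s)(x := cp s v @ [x], m := cp s v @ [x, m]) \<rparr>"

lemma m_not_inS: "\<not> inS s m"
  using mate_closed[of m x] xm_in_M x_not_inS by (metis insert_commute)

lemma v_even: "v \<in> evens s"
  using Bv v_in_Bv by (auto simp: evens_def)

lemma v_inS: "inS s v"
  using v_even by (simp add: inS_def)

lemma x_m_not_on_cp_v: "x \<notin> set (cp s v)" "m \<notin> set (cp s v)"
  using cp_inS[OF v_inS] x_not_inS m_not_inS by blast+

lemma evens_grown: "evens grown = insert m (evens s)"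
  by (simp add: evens_def grown_def)

lemma inS_grown: "inS grown u \<longleftrightarrow> inS s u \<or> u = x \<or> u = m"
  unfolding inS_def evens_grown by (auto simp: grown_def)

lemma nodes_grown: "nodes grown = insert {x} (insert {m} (nodes s))"
  unfolding nodes_def by (simp add: grown_def insert_commute)

lemma old_node_not_new: "N \<in> nodes s \<Longrightarrow> N \<noteq> {x} \<and> N \<noteq> {m}"
  using node_vertex_inS[of N s] x_not_inS m_not_inS by (metis singletonI)

lemma node_base_grown: "node_base grown N = (if N = {m} then m else node_base s N)"
  by (simp add: node_base_def grown_def)

lemma node_base_x: "node_base s {x} = x"
  using x_not_inS by (auto simp: node_base_def inS_def evens_def)

lemma cp_grown:
  "cp grown u = (if u = m then cp s v @ [x, m] else if u = x then cp s v @ [x] else cp s u)"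
  using x_ne_m by (simp add: grown_def)

lemma par_grown:
  "par grown N = (if N = {m} then Some {x} else if N = {x} then Some Bv else par s N)"
  by (simp add: grown_def)

lemma grown_mate_closed:
  assumes ac: "{a, c} \<in> M" and a: "inS grown a"
  shows "inS grown c"
proof (cases "inS s a")
  case True
  then show ?thesis using mate_closed[OF ac] inS_grown by blast
next
  case False
  then have "{a, c} \<inter> {x, m} \<noteq> {}" using a inS_grown by blast
  then have "{a, c} = {x, m}" using matching[OF ac xm_in_M] by blast
  then show ?thesis using inS_grown by (metis doubleton_eq_iff)
qed

lemma grown_cp_child:
  assumes N: "N \<in> nodes grown" and p: "par grown N = Some P"
  shows "\<exists>u\<in>P. cp grown (node_base grown N) = cp grown u @ [node_base grown N]"
proof -
  consider "N = {x}" | "N = {m}" | "N \<in> nodes s" "N \<noteq> {x}" "N \<noteq> {m}"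
    using N nodes_grown by blast
  then show ?thesis
  proof cases
    case 1
    then have "P = Bv" using p par_grown x_ne_m by simp
    have "cp grown (node_base grown N) = cp grown v @ [node_base grown N]"
      using 1 v_inS x_not_inS m_not_inS x_ne_m node_base_x by (auto simp: node_base_grown cp_grown)
    then show ?thesis using \<open>P = Bv\<close> v_in_Bv by blast
  next
    case 2
    then have "P = {x}" using p par_grown by simp
    then show ?thesis using 2 x_ne_m by (simp add: node_base_grown cp_grown)
  next
    case 3
    then obtain u where u: "u \<in> P" "cp s (node_base s N) = cp s u @ [node_base s N]"
      using cp_child[of N P] p par_grown by auto
    have "inS s u" using node_vertex_inS[OF parent_in_nodes[OF 3(1)] u(1)] p par_grown 3 by simp
    moreover have "inS s (node_base s N)" using node_vertex_inS[OF 3(1) node_base_in[OF 3(1)]] .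
    ultimately have "cp grown (node_base grown N) = cp grown u @ [node_base grown N]"
      using u 3 x_not_inS m_not_inS by (auto simp: node_base_grown cp_grown)
    then show ?thesis using u(1) by blast
  qed
qed

lemma grown_odd_parent_cases:
  assumes K: "K \<in> nodes grown" and p: "par grown K = Some {w}" and w: "w \<in> odds grown"
  shows "K = {m} \<and> w = x \<or> K \<in> nodes s \<and> par s K = Some {w} \<and> w \<in> odds s"
proof -
  consider "K = {m}" | "K = {x}" | "K \<in> nodes s" "K \<noteq> {x}" "K \<noteq> {m}"
    using K nodes_grown by blast
  then show ?thesis
  proof cases
    case 1
    then show ?thesis using p par_grown by simp
  next
    case 2
    then have "Bv = {w}" using p par_grown x_ne_m by simp
    moreover have "w \<noteq> x" using calculation Bv v_in_Bv v_inS x_not_inS by auto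
    then have "w \<in> odds s" using w by (simp add: grown_def)
    ultimately show ?thesis using Bv odd_singleton_not_blossom by simp
  next
    case 3
    then have "par s K = Some {w}" using p par_grown by simp
    moreover have "inS s w" using node_vertex_inS[OF parent_in_nodes[OF 3(1) calculation]] by simp
    ultimately show ?thesis using 3(1) w x_not_inS by (auto simp: grown_def)
  qed
qed

lemma grown_cp_root:
  assumes N: "N \<in> nodes grown" and p: "par grown N = None"
  shows "cp grown (node_base grown N) = [node_base grown N]"
proof -
  have N_old: "N \<noteq> {x}" "N \<noteq> {m}" "N \<in> nodes s"
    using p N nodes_grown par_grown[of N] by (simp_all split: if_splits)
  have "inS s (node_base s N)" using node_vertex_inS[OF N_old(3) node_base_in[OF N_old(3)]] .
  then show ?thesis
    using cp_root[OF N_old(3)] p N_old x_not_inS m_not_inS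
    by (auto simp: par_grown node_base_grown cp_grown)
qed

lemma grown_cp_through_base:
  assumes N: "N \<in> nodes grown" and u: "u \<in> N"
  shows "\<exists>r. cp grown u = cp grown (node_base grown N) @ r \<and> set r \<subseteq> N"
proof (cases "N \<in> nodes s")
  case True
  then obtain r where "cp s u = cp s (node_base s N) @ r" "set r \<subseteq> N"
    using cp_through_base u by blast
  moreover have "inS s u" "inS s (node_base s N)"
    using node_vertex_inS[OF True] u node_base_in[OF True] by auto
  ultimately show ?thesis using old_node_not_new[OF True] x_not_inS m_not_inS
    by (auto simp: node_base_grown cp_grown)
next
  case False
  then have "N = {x} \<or> N = {m}" using N nodes_grown by blast
  then show ?thesis using u node_base_x by (auto simp: node_base_grown)
qed

lemma grown_lcp_eq_length:
  "u \<in> evens grown \<Longrightarrow> lcp grown u = int (length (cp grown u)) - 1"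
  "u \<in> odds grown \<Longrightarrow> lcpo grown u = int (length (cp grown u)) - 1"
proof -
  assume "u \<in> evens grown"
  then have "u = m \<or> u \<in> evens s \<and> u \<noteq> x \<and> u \<noteq> m"
    using x_not_inS m_not_inS by (auto simp: evens_grown inS_def)
  then show "lcp grown u = int (length (cp grown u)) - 1"
    using lcp_eq_length v_even lcp_v by (auto simp: cp_grown grown_def)
next
  assume "u \<in> odds grown"
  then have "u = x \<or> u \<in> odds s \<and> u \<noteq> x \<and> u \<noteq> m"
    using x_not_inS m_not_inS by (auto simp: grown_def inS_def)
  then show "lcpo grown u = int (length (cp grown u)) - 1"
    using lcpo_eq_length lcp_eq_length[OF v_even] lcp_v x_ne_m by (auto simp: cp_grown grown_def)
qed

lemma search_structure_grown: "search_structure M grown"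
proof unfold_locales
  fix N K assume "N \<in> blos grown" "K \<in> blos grown" "N \<noteq> K"
  moreover have "m \<notin> B" if "B \<in> blos s" for B
    using that m_not_inS by (auto simp: inS_def evens_def)
  ultimately show "N \<inter> K = {}" using blossoms_disjoint by (auto simp: grown_def)
next
  show "evens grown \<inter> odds grown = {}"
    unfolding evens_grown using evens_odds_disjoint x_not_inS m_not_inS x_ne_m
    by (auto simp: grown_def inS_def)
next
  fix N assume "N \<in> blos grown"
  then show "base grown N \<in> N" using base_in_blossom by (auto simp: grown_def)
next
  fix N P assume "N \<in> nodes grown" "par grown N = Some P"
  then show "P \<in> nodes grown"
    using parent_in_nodes[of N P] Bv unfolding nodes_grown
    by (auto simp: par_grown nodes_def split: if_splits)
next
  fix u assume "inS grown u"
  then show "distinct (cp grown u)"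
    using cp_distinct v_inS x_m_not_on_cp_v x_ne_m x_not_inS m_not_inS
    by (auto simp: inS_grown cp_grown)
next
  fix w N N' assume w: "w \<in> odds grown" and N: "N \<in> nodes grown" "N' \<in> nodes grown"
    and p: "par grown N = Some {w}" "par grown N' = Some {w}"
  then show "N = N'"
    using grown_odd_parent_cases[OF N(1) p(1) w] grown_odd_parent_cases[OF N(2) p(2) w]
      odd_unique_child x_not_inS by (auto simp: inS_def)
qed (fact grown_mate_closed grown_cp_child grown_cp_root grown_cp_through_base grown_lcp_eq_length)+

end

lemma grow_step_preserves_search_structure:
  assumes gm: "graph_matching V E M" and S: "search_structure M s" and step: "grow_step E M s s'"
  shows "search_structure M s'"
proof -
  obtain v x m Bv where Bv: "Bv \<in> blos s" "v \<in> Bv" and x: "\<not> inS s x" and xm: "{x, m} \<in> M"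
    and lcp_v: "lcp s v = int (phase s) - 2"
    and s': "s' = s\<lparr> odds := insert x (odds s), blos := insert {m} (blos s),
               par := (par s)({x} := Some Bv, {m} := Some {x}),
               base := (base s)({m} := m),
               lcpo := (lcpo s)(x := int (phase s) - 1),
               lcp := (lcp s)(m := int (phase s)),
               cp := (cp s)(x := cp s v @ [x], m := cp s v @ [x, m]) \<rparr>"
    using step unfolding grow_step_def by blast
  have "{x, m} \<in> {{a, b} | a b. a \<in> V \<and> b \<in> V \<and> a \<noteq> b}"
    using gm xm by (auto simp: graph_matching_def)
  then obtain a b where "{x, m} = {a, b}" "a \<noteq> b" by blast
  then have "x \<noteq> m" by force
  moreover have "\<forall>e\<in>M. \<forall>f\<in>M. e \<noteq> f \<longrightarrow> e \<inter> f = {}"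
    using gm by (simp add: graph_matching_def)
  ultimately interpret grow_setting M s v x m Bv
    using S Bv x xm lcp_v by (simp add: grow_setting_def grow_setting_axioms_def)
  show ?thesis using search_structure_grown s' by (simp add: grown_def)
qed

locale bridge_setting = search_structure +
  fixes x y :: 'v and Bx By B :: "'v set"
  assumes Bx: "Bx \<in> blos s" and By: "By \<in> blos s" and x_in_Bx: "x \<in> Bx" and y_in_By: "y \<in> By"
    and anc_Bx: "anc s Bx B" and anc_By: "anc s By B"
    and lca: "anc s Bx C \<Longrightarrow> anc s By C \<Longrightarrow> anc s B C"
begin

lemma bridge_setting_swap: "bridge_setting M s y x By Bx B"
  using Bx By x_in_Bx y_in_By anc_Bx anc_By lca
  by (simp add: bridge_setting_def bridge_setting_axioms_def search_structure_axioms)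

definition tree_path :: "'v set \<Rightarrow> 'v set set" where
  "tree_path C = {N. anc s C N \<and> anc s N B}"

definition cycle_nodes :: "'v set set" where
  "cycle_nodes = tree_path Bx \<union> tree_path By"

definition new_blossom :: "'v set" where
  "new_blossom = \<Union> cycle_nodes"

definition odds_on_path :: "'v set \<Rightarrow> 'v set" where
  "odds_on_path C = {z \<in> odds s. {z} \<in> tree_path C}"

definition relabelled :: "'v set" where
  "relabelled = odds_on_path Bx \<union> odds_on_path By"

definition bridged :: "'v pstate" where
  "bridged = merge s x y Bx By B"

lemma bridged_fields:
  "blos bridged = insert new_blossom (blos s - cycle_nodes)"
  "odds bridged = odds s - relabelled"
  "par bridged N = (if N = new_blossom then par s B else if N \<in> cycle_nodes then None
     else map_option (\<lambda>P. if P \<in> cycle_nodes then new_blossom else P) (par s N))"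
  "base bridged = (base s)(new_blossom := base s B)"
  "lcp bridged u = (if u \<in> relabelled then lcp s x + 1 + lcp s y - lcpo s u else lcp s u)"
  "lcpo bridged = lcpo s"
  "cp bridged u = (if u \<in> odds_on_path By then cp s x @ rev (dropWhile (\<lambda>w. w \<noteq> u) (cp s y))
     else if u \<in> odds_on_path Bx then cp s y @ rev (dropWhile (\<lambda>w. w \<noteq> u) (cp s x))
     else cp s u)"
  unfolding bridged_def merge_def Let_def relabelled_def odds_on_path_def new_blossom_def
    cycle_nodes_def tree_path_def by simp_all

lemma B_blossom: "B \<in> blos s"
  using lca_is_blossom[OF Bx By anc_Bx anc_By lca] .

lemma B_node: "B \<in> nodes s"
  using B_blossom by (simp add: nodes_def)

lemma cycle_node_in_nodes: "N \<in> cycle_nodes \<Longrightarrow> N \<in> nodes s"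
  using anc_in_nodes Bx By unfolding cycle_nodes_def tree_path_def nodes_def by blast

lemma cycle_node_anc_B: "N \<in> cycle_nodes \<Longrightarrow> anc s N B"
  unfolding cycle_nodes_def tree_path_def by blast

lemma ends_in_cycle_nodes: "Bx \<in> cycle_nodes" "By \<in> cycle_nodes" "B \<in> cycle_nodes"
  using anc_Bx anc_By anc_refl unfolding cycle_nodes_def tree_path_def by blast+

lemma relabelled_iff: "z \<in> relabelled \<longleftrightarrow> z \<in> odds s \<and> {z} \<in> cycle_nodes"
  unfolding relabelled_def odds_on_path_def cycle_nodes_def by blast

lemma relabelled_subset: "relabelled \<subseteq> new_blossom"
  using relabelled_iff unfolding new_blossom_def by blast

lemma node_base_B: "node_base s B = base s B"
  using B_blossom by (simp add: node_base_def)

lemma base_B_even: "base s B \<in> evens s"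
  using B_blossom base_in_blossom by (auto simp: evens_def)

lemma base_B_not_relabelled: "base s B \<notin> relabelled"
  using base_B_even evens_odds_disjoint relabelled_iff by blast

lemma outside_disjoint_new_blossom:
  assumes "N \<in> nodes s" "N \<notin> cycle_nodes"
  shows "N \<inter> new_blossom = {}"
proof -
  have "N \<inter> K = {}" if "K \<in> cycle_nodes" for K
    using nodes_disjoint[OF assms(1) cycle_node_in_nodes[OF that]] that assms(2) by blast
  then show ?thesis unfolding new_blossom_def by blast
qed

lemma outside_ne_new_blossom: "N \<in> nodes s \<Longrightarrow> N \<notin> cycle_nodes \<Longrightarrow> N \<noteq> new_blossom"
  using outside_disjoint_new_blossom node_nonempty by blast

lemma outside_not_relabelled: "N \<in> nodes s \<Longrightarrow> N \<notin> cycle_nodes \<Longrightarrow> u \<in> N \<Longrightarrow> u \<notin> relabelled"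
  using outside_disjoint_new_blossom relabelled_subset by blast

lemma nodes_bridged: "nodes bridged = insert new_blossom (nodes s - cycle_nodes)"
proof -
  have "(\<lambda>z. {z}) ` (odds s - relabelled) = (\<lambda>z. {z}) ` odds s - cycle_nodes"
    using relabelled_iff by auto
  then show ?thesis unfolding nodes_def bridged_fields by blast
qed

lemma evens_bridged: "evens bridged = evens s \<union> relabelled"
proof -
  have "new_blossom \<subseteq> evens s \<union> relabelled"
  proof
    fix u assume "u \<in> new_blossom"
    then obtain K where K: "K \<in> cycle_nodes" "u \<in> K" unfolding new_blossom_def by blast
    then consider "K \<in> blos s" | w where "w \<in> odds s" "K = {w}"
      using cycle_node_in_nodes unfolding nodes_def by blast
    then show "u \<in> evens s \<union> relabelled"
      by cases (use K relabelled_iff in \<open>auto simp: evens_def\<close>)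
  qed
  moreover have "evens s \<subseteq> new_blossom \<union> \<Union> (blos s - cycle_nodes)"
    unfolding evens_def new_blossom_def by blast
  ultimately show ?thesis using relabelled_subset unfolding evens_def bridged_fields by blast
qed

lemma inS_bridged: "inS bridged u \<longleftrightarrow> inS s u"
  using relabelled_iff unfolding inS_def evens_bridged bridged_fields by blast

lemma node_base_new_blossom: "node_base bridged new_blossom = base s B"
  by (simp add: node_base_def bridged_fields)

lemma node_base_bridged_outside:
  "N \<in> nodes s \<Longrightarrow> N \<notin> cycle_nodes \<Longrightarrow> node_base bridged N = node_base s N"
  using outside_ne_new_blossom by (simp add: node_base_def bridged_fields)

lemma cp_bridged_outside: "u \<notin> relabelled \<Longrightarrow> cp bridged u = cp s u"
  by (simp add: bridged_fields relabelled_def)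

lemma parent_of_B_outside: "par s B = Some P \<Longrightarrow> P \<in> nodes s \<and> P \<notin> cycle_nodes"
  using parent_in_nodes[OF B_node] parent_not_anc[OF B_node] cycle_node_anc_B by blast

text \<open>Each odd vertex has a unique child, so the tree path to B through an odd node passes
  through its child.\<close>

lemma child_of_odd_cycle_node:
  assumes N: "N \<in> nodes s" and p: "par s N = Some {w}" and w: "w \<in> odds s"
    and w_cycle: "{w} \<in> cycle_nodes"
  shows "N \<in> cycle_nodes"
proof -
  have "anc s C N" if C: "C \<in> blos s" "anc s C {w}" for C
  proof -
    have "C \<noteq> {w}" using C(1) odd_singleton_not_blossom[OF w] by blast
    then obtain C' where "anc s C C'" "C' \<in> nodes s" "par s C' = Some {w}"
      using last_step_to_odd C(2) by metis
    then show ?thesis using odd_unique_child[OF w _ N _ p] by blast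
  qed
  moreover have "anc s N B" using anc_parent[OF N p] cycle_node_anc_B[OF w_cycle] .
  ultimately show ?thesis using w_cycle Bx By unfolding cycle_nodes_def tree_path_def by blast
qed

lemma common_ancestor_below_B: "anc s Bx K \<Longrightarrow> anc s By K \<Longrightarrow> anc s K B \<Longrightarrow> K = B"
  using lca anc_antisym by blast

lemma cp_x_avoids_path_By:
  assumes z: "z \<in> odds_on_path By"
  shows "set (cp s x) \<inter> \<Union>{K. anc s By K \<and> anc s K {z}} = {}"
proof (rule ccontr)
  have z_odd: "z \<in> odds s" and z_B: "anc s {z} B"
    using z unfolding odds_on_path_def tree_path_def by blast+
  have By_node: "By \<in> nodes s" and Bx_node: "Bx \<in> nodes s"
    using By Bx by (simp_all add: nodes_def)
  assume "set (cp s x) \<inter> \<Union>{K. anc s By K \<and> anc s K {z}} \<noteq> {}"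
  then obtain w K1 K2 where K1: "w \<in> K1" "anc s Bx K1" and K2: "w \<in> K2" "anc s By K2" "anc s K2 {z}"
    using cp_subset_ancestors[OF Bx_node x_in_Bx] by blast
  have "K1 = K2"
    using nodes_disjoint[OF anc_in_nodes[OF K1(2) Bx_node] anc_in_nodes[OF K2(2) By_node]] K1(1) K2(1)
    by blast
  then have "K2 = B" using common_ancestor_below_B K1(2) K2(2) anc_trans[OF K2(3) z_B] by blast
  then have "B = {z}" using K2(3) z_B anc_antisym by blast
  then show False using B_blossom odd_singleton_not_blossom[OF z_odd] by simp
qed

lemma cp_odd_on_path_By:
  assumes z: "z \<in> odds_on_path By"
  shows "\<exists>r. cp s y = cp s z @ r \<and> dropWhile (\<lambda>w. w \<noteq> z) (cp s y) = z # r
    \<and> distinct (cp s x @ rev (z # r)) \<and> set (z # r) \<subseteq> \<Union> (tree_path By)"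
proof -
  have z_odd: "z \<in> odds s" and By_z: "anc s By {z}" and z_B: "anc s {z} B"
    using z unfolding odds_on_path_def tree_path_def by blast+
  have z_node: "{z} \<in> nodes s" using z_odd by (simp add: nodes_def)
  have By_node: "By \<in> nodes s" and Bx_node: "Bx \<in> nodes s"
    using By Bx by (simp_all add: nodes_def)
  have y_inS: "inS s y" and x_inS: "inS s x"
    using node_vertex_inS[OF By_node y_in_By] node_vertex_inS[OF Bx_node x_in_Bx] .
  have base_z: "node_base s {z} = z"
    using odd_singleton_not_blossom[OF z_odd] by (simp add: node_base_def)
  obtain r where r: "cp s y = cp s z @ r" and r_path: "set r \<subseteq> \<Union>{K. anc s By K \<and> anc s K {z}}"
    using anc_cp_prefix[OF By_z By_node y_in_By] base_z by auto
  have drop: "dropWhile (\<lambda>w. w \<noteq> z) (cp s y) = z # r"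
    using dropWhile_cp_node_base[OF z_node y_inS] r base_z by simp
  have path: "set (z # r) \<subseteq> \<Union>{K. anc s By K \<and> anc s K {z}}"
    using r_path By_z anc_refl[of s "{z}"] by auto
  also have "\<dots> \<subseteq> \<Union> (tree_path By)"
    using z_B anc_trans unfolding tree_path_def by blast
  finally have path_B: "set (z # r) \<subseteq> \<Union> (tree_path By)" .
  have "distinct (z # r)"
    using cp_distinct[OF y_inS] r cp_node_base_snoc[OF z_node] base_z by auto
  then have "distinct (cp s x @ rev (z # r))"
    using cp_distinct[OF x_inS] cp_x_avoids_path_By[OF z] path by auto
  then show ?thesis using r drop path_B by blast
qed

lemma cp_cycle_node_from_base:
  assumes K: "K \<in> cycle_nodes" and u: "u \<in> K"
  shows "\<exists>r. cp s u = cp s (base s B) @ r \<and> set r \<subseteq> new_blossom"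
proof -
  obtain r where r: "cp s u = cp s (base s B) @ r" "set r \<subseteq> \<Union>{K'. anc s K K' \<and> anc s K' B}"
    using anc_cp_prefix[OF cycle_node_anc_B[OF K] cycle_node_in_nodes[OF K] u] node_base_B by auto
  have "{K'. anc s K K' \<and> anc s K' B} \<subseteq> cycle_nodes"
    using K anc_trans unfolding cycle_nodes_def tree_path_def by blast
  then show ?thesis using r unfolding new_blossom_def by blast
qed

text \<open>Both sides of the bridge at once: a is the end of the bridge on the other side than u,
  c the end on the same side.\<close>

lemma relabelled_cp:
  assumes "u \<in> relabelled"
  obtains a c r where "(a, c) = (x, y) \<or> (a, c) = (y, x)"
    "cp bridged u = cp s a @ rev (u # r)" "cp s c = cp s u @ r"
    "distinct (cp s a @ rev (u # r))" "set (u # r) \<subseteq> new_blossom"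
proof -
  have paths: "\<Union> (tree_path Bx) \<subseteq> new_blossom" "\<Union> (tree_path By) \<subseteq> new_blossom"
    unfolding new_blossom_def cycle_nodes_def by blast+
  consider "u \<in> odds_on_path By" | "u \<in> odds_on_path Bx" "u \<notin> odds_on_path By"
    using assms unfolding relabelled_def by blast
  then show thesis
  proof cases
    case 1
    then obtain r where r: "cp s y = cp s u @ r" "dropWhile (\<lambda>w. w \<noteq> u) (cp s y) = u # r"
      "distinct (cp s x @ rev (u # r))" "set (u # r) \<subseteq> \<Union> (tree_path By)"
      using cp_odd_on_path_By by blast
    have "cp bridged u = cp s x @ rev (u # r)" using 1 r(2) by (simp add: bridged_fields)
    then show thesis using that[of x y r] r paths(2) by blast
  next
    case 2
    then obtain r where r: "cp s x = cp s u @ r" "dropWhile (\<lambda>w. w \<noteq> u) (cp s x) = u # r"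
      "distinct (cp s y @ rev (u # r))" "set (u # r) \<subseteq> \<Union> (tree_path Bx)"
      using bridge_setting.cp_odd_on_path_By[OF bridge_setting_swap] by blast
    have "cp bridged u = cp s y @ rev (u # r)" using 2 r(2) by (simp add: bridged_fields)
    then show thesis using that[of y x r] r paths(1) by blast
  qed
qed

lemma par_bridged_outside:
  "N \<notin> cycle_nodes \<Longrightarrow> N \<noteq> new_blossom \<Longrightarrow>
    par bridged N = map_option (\<lambda>P. if P \<in> cycle_nodes then new_blossom else P) (par s N)"
  by (simp add: bridged_fields)

lemma bridged_cp_child:
  assumes N: "N \<in> nodes bridged" and p: "par bridged N = Some P"
  shows "\<exists>u\<in>P. cp bridged (node_base bridged N) = cp bridged u @ [node_base bridged N]"
proof (cases "N = new_blossom")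
  case True
  then have pB: "par s B = Some P" using p by (simp add: bridged_fields)
  obtain u where u: "u \<in> P" "cp s (base s B) = cp s u @ [base s B]"
    using cp_child[OF B_node pB] node_base_B by auto
  have "u \<notin> relabelled"
    using outside_not_relabelled parent_of_B_outside[OF pB] u(1) by blast
  then have "cp bridged (node_base bridged N) = cp bridged u @ [node_base bridged N]"
    using True u base_B_not_relabelled by (simp add: node_base_new_blossom cp_bridged_outside)
  then show ?thesis using u(1) by blast
next
  case False
  then have N_old: "N \<in> nodes s" "N \<notin> cycle_nodes" using N nodes_bridged by auto
  then obtain P0 where P0: "par s N = Some P0" "P = (if P0 \<in> cycle_nodes then new_blossom else P0)"
    using p par_bridged_outside False by auto
  obtain u where u: "u \<in> P0" "cp s (node_base s N) = cp s u @ [node_base s N]"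
    using cp_child[OF N_old(1) P0(1)] by blast
  have "u \<in> P \<and> u \<notin> relabelled"
  proof (cases "P0 \<in> cycle_nodes")
    case True
    have "P0 \<in> blos s"
    proof (rule ccontr)
      assume "P0 \<notin> blos s"
      then obtain w where "w \<in> odds s" "P0 = {w}"
        using parent_in_nodes[OF N_old(1) P0(1)] unfolding nodes_def by blast
      then show False using child_of_odd_cycle_node N_old P0(1) True by blast
    qed
    then have "u \<in> evens s" using u(1) by (auto simp: evens_def)
    then show ?thesis
      using True P0(2) u(1) relabelled_iff evens_odds_disjoint unfolding new_blossom_def by auto
  next
    case False
    then show ?thesis
      using P0(2) u(1) outside_not_relabelled[OF parent_in_nodes[OF N_old(1) P0(1)]] by auto
  qed
  moreover have "node_base s N \<notin> relabelled"
    using outside_not_relabelled[OF N_old node_base_in[OF N_old(1)]] .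
  ultimately have "cp bridged (node_base bridged N) = cp bridged u @ [node_base bridged N]"
    using u N_old by (simp add: node_base_bridged_outside cp_bridged_outside)
  then show ?thesis using \<open>u \<in> P \<and> u \<notin> relabelled\<close> by blast
qed

lemma bridged_cp_through_base:
  assumes N: "N \<in> nodes bridged" and u: "u \<in> N"
  shows "\<exists>r. cp bridged u = cp bridged (node_base bridged N) @ r \<and> set r \<subseteq> N"
proof (cases "N = new_blossom")
  case True
  have "\<exists>r. cp bridged u = cp s (base s B) @ r \<and> set r \<subseteq> new_blossom"
  proof (cases "u \<in> relabelled")
    case True
    then obtain a c r where ac: "(a, c) = (x, y) \<or> (a, c) = (y, x)"
      and r: "cp bridged u = cp s a @ rev (u # r)" "set (u # r) \<subseteq> new_blossom"
      by (rule relabelled_cp)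
    have "\<exists>K\<in>cycle_nodes. a \<in> K"
      using ac ends_in_cycle_nodes x_in_Bx y_in_By by blast
    then obtain ra where "cp s a = cp s (base s B) @ ra" "set ra \<subseteq> new_blossom"
      using cp_cycle_node_from_base by blast
    then show ?thesis using r by (intro exI[of _ "ra @ rev (u # r)"]) auto
  next
    case False
    obtain K where "K \<in> cycle_nodes" "u \<in> K" using u True unfolding new_blossom_def by blast
    then show ?thesis using cp_cycle_node_from_base False cp_bridged_outside by metis
  qed
  then show ?thesis
    using True base_B_not_relabelled by (simp add: node_base_new_blossom cp_bridged_outside)
next
  case False
  then have N_old: "N \<in> nodes s" "N \<notin> cycle_nodes" using N nodes_bridged by auto
  then show ?thesis
    using cp_through_base[OF N_old(1) u] outside_not_relabelled[OF N_old] u node_base_in[OF N_old(1)]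
    by (simp add: node_base_bridged_outside cp_bridged_outside)
qed

lemma bridged_lcp_eq_length:
  assumes "u \<in> evens bridged"
  shows "lcp bridged u = int (length (cp bridged u)) - 1"
proof (cases "u \<in> relabelled")
  case True
  then obtain a c r where ac: "(a, c) = (x, y) \<or> (a, c) = (y, x)"
    and r: "cp bridged u = cp s a @ rev (u # r)" "cp s c = cp s u @ r"
    by (rule relabelled_cp)
  have "x \<in> evens s" "y \<in> evens s" using Bx By x_in_Bx y_in_By by (auto simp: evens_def)
  then have "lcp s a = int (length (cp s a)) - 1" "lcp s c = int (length (cp s c)) - 1"
    "lcp s x + lcp s y = lcp s a + lcp s c"
    using ac lcp_eq_length by auto
  moreover have "lcpo s u = int (length (cp s u)) - 1"
    using True relabelled_iff lcpo_eq_length by blast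
  ultimately show ?thesis using True r by (simp add: bridged_fields)
next
  case False
  then have "u \<in> evens s" "lcp bridged u = lcp s u"
    using assms by (simp_all add: evens_bridged bridged_fields)
  then show ?thesis using lcp_eq_length cp_bridged_outside[OF False] by simp
qed

lemma bridged_odd_unique_child:
  assumes w: "w \<in> odds bridged" and N: "N \<in> nodes bridged" "N' \<in> nodes bridged"
    and p: "par bridged N = Some {w}" "par bridged N' = Some {w}"
  shows "N = N'"
proof -
  have w_odd: "w \<in> odds s" using w by (simp add: bridged_fields)
  have "base s B \<in> new_blossom"
    using base_in_blossom[OF B_blossom] ends_in_cycle_nodes(3) unfolding new_blossom_def by blast
  moreover have "base s B \<noteq> w" using w_odd base_B_even evens_odds_disjoint by auto
  ultimately have new_ne: "new_blossom \<noteq> {w}" by auto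
  define orig where "orig K = (if K = new_blossom then B else K)" for K
  have orig: "orig K \<in> nodes s \<and> par s (orig K) = Some {w} \<and> (K = new_blossom \<or> K \<notin> cycle_nodes)"
    if K: "K \<in> nodes bridged" "par bridged K = Some {w}" for K
  proof (cases "K = new_blossom")
    case True
    then show ?thesis using K(2) B_node by (simp add: orig_def bridged_fields)
  next
    case False
    then have K_old: "K \<in> nodes s" "K \<notin> cycle_nodes" using K(1) nodes_bridged by auto
    then obtain P0 where "par s K = Some P0" "{w} = (if P0 \<in> cycle_nodes then new_blossom else P0)"
      using K(2) par_bridged_outside[OF K_old(2) False] by (cases "par s K") simp_all
    then have "par s K = Some {w}" using new_ne by (auto split: if_splits)
    then show ?thesis using K_old False by (simp add: orig_def)
  qed
  have oN: "orig N \<in> nodes s" "par s (orig N) = Some {w}" "N = new_blossom \<or> N \<notin> cycle_nodes"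
    using orig[OF N(1) p(1)] by blast+
  have oN': "orig N' \<in> nodes s" "par s (orig N') = Some {w}" "N' = new_blossom \<or> N' \<notin> cycle_nodes"
    using orig[OF N(2) p(2)] by blast+
  have "orig N = orig N'" using odd_unique_child[OF w_odd oN(1) oN'(1) oN(2) oN'(2)] .
  then show "N = N'"
    using oN(3) oN'(3) ends_in_cycle_nodes(3) unfolding orig_def by (auto split: if_splits)
qed

lemma bridged_blossoms_disjoint:
  assumes N: "N \<in> blos bridged" and K: "K \<in> blos bridged" and "N \<noteq> K"
  shows "N \<inter> K = {}"
proof -
  have outside: "L \<inter> new_blossom = {}" if "L \<in> blos s - cycle_nodes" for L
    using outside_disjoint_new_blossom that by (simp add: nodes_def)
  consider "N = new_blossom" | "K = new_blossom" | "N \<in> blos s" "K \<in> blos s"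
    using N K by (auto simp: bridged_fields)
  then show ?thesis
    by cases (use N K \<open>N \<noteq> K\<close> outside blossoms_disjoint in \<open>auto simp: bridged_fields\<close>)
qed

lemma bridged_parent_in_nodes:
  assumes N: "N \<in> nodes bridged" and p: "par bridged N = Some P"
  shows "P \<in> nodes bridged"
proof (cases "N = new_blossom")
  case True
  then show ?thesis using p parent_of_B_outside by (simp add: nodes_bridged bridged_fields)
next
  case False
  then have N_old: "N \<in> nodes s" "N \<notin> cycle_nodes" using N nodes_bridged by auto
  then obtain P0 where "par s N = Some P0" "P = (if P0 \<in> cycle_nodes then new_blossom else P0)"
    using p par_bridged_outside False by (cases "par s N") simp_all
  then show ?thesis using parent_in_nodes[OF N_old(1)] by (simp add: nodes_bridged)
qed

lemma bridged_cp_root: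
  assumes N: "N \<in> nodes bridged" and p: "par bridged N = None"
  shows "cp bridged (node_base bridged N) = [node_base bridged N]"
proof (cases "N = new_blossom")
  case True
  then have "par s B = None" using p by (simp add: bridged_fields)
  then show ?thesis using True cp_root[OF B_node] base_B_not_relabelled
    by (simp add: node_base_B node_base_new_blossom cp_bridged_outside)
next
  case False
  then have N_old: "N \<in> nodes s" "N \<notin> cycle_nodes" using N nodes_bridged by auto
  then have "par s N = None" using p par_bridged_outside False by simp
  then show ?thesis using cp_root N_old outside_not_relabelled[OF N_old node_base_in[OF N_old(1)]]
    by (simp add: node_base_bridged_outside cp_bridged_outside)
qed

lemma search_structure_bridged: "search_structure M bridged"
proof unfold_locales
  fix a c assume "{a, c} \<in> M" "inS bridged a"
  then show "inS bridged c" using mate_closed by (simp add: inS_bridged)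
next
  show "evens bridged \<inter> odds bridged = {}"
    using evens_odds_disjoint unfolding evens_bridged by (auto simp: bridged_fields)
next
  fix N assume "N \<in> blos bridged"
  moreover have "base s B \<in> new_blossom"
    using base_in_blossom[OF B_blossom] ends_in_cycle_nodes(3) unfolding new_blossom_def by blast
  ultimately show "base bridged N \<in> N" using base_in_blossom by (auto simp: bridged_fields)
next
  fix u assume "u \<in> odds bridged"
  then show "lcpo bridged u = int (length (cp bridged u)) - 1"
    using lcpo_eq_length cp_bridged_outside by (simp add: bridged_fields)
next
  fix u assume u: "inS bridged u"
  show "distinct (cp bridged u)"
  proof (cases "u \<in> relabelled")
    case True
    then show ?thesis by (rule relabelled_cp) simp
  next
    case False
    then show ?thesis using u cp_distinct by (simp add: inS_bridged cp_bridged_outside)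
  qed
qed (fact bridged_blossoms_disjoint bridged_parent_in_nodes bridged_cp_root bridged_cp_child
    bridged_cp_through_base bridged_lcp_eq_length bridged_odd_unique_child)+

end

lemma bridge_step_preserves_search_structure:
  assumes S: "search_structure M s" and step: "bridge_step E M s s'"
  shows "search_structure M s'"
proof -
  obtain x y Bx By B where "bridge_edge E M s x y Bx By" "anc s Bx B" "anc s By B"
    "\<forall>C. anc s Bx C \<and> anc s By C \<longrightarrow> anc s B C" and s': "s' = merge s x y Bx By B"
    using step unfolding bridge_step_def by blast
  then interpret bridge_setting M s x y Bx By B
    using S by (simp add: bridge_setting_def bridge_setting_axioms_def bridge_edge_def)
  show ?thesis using search_structure_bridged s' by (simp add: bridged_def)
qed

lemma reach_search_structure:
  assumes "graph_matching V E M" "reach V E M s"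
  shows "search_structure M s"
  using assms(2)
proof (induction rule: reach.induct)
  case reach_init
  show ?case by (rule search_structure_init)
next
  case (reach_grow s s')
  then show ?case using grow_step_preserves_search_structure[OF assms(1)] by blast
next
  case (reach_bridge s s')
  then show ?case using bridge_step_preserves_search_structure by blast
next
  case (reach_end_growth s s')
  then show ?case by (simp add: end_growth_def search_structure_phase_update)
next
  case (reach_end_phase s s')
  then show ?case by (simp add: end_phase_def search_structure_phase_update)
qed

theorem lemma1:
  fixes V :: "'v set" and E M :: "'v set set" and s :: "'v pstate" and B :: "'v set" and v :: 'v
  assumes "graph_matching V E M"
    and "reach V E M s"
    and "B \<in> blos s"
    and "v \<in> B"
  shows "base s B \<in> set (cp s v)
    \<and> int (length (dropWhile (\<lambda>w. w \<noteq> base s B) (cp s v))) - 1 = lcp s v - lcp s (base s B)"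
proof -
  interpret search_structure M s using reach_search_structure[OF assms(1,2)] .
  have B: "B \<in> nodes s" and b: "node_base s B = base s B"
    using assms(3) by (simp_all add: nodes_def node_base_def)
  have v_even: "v \<in> evens s" and b_even: "base s B \<in> evens s"
    using assms(3,4) base_in_blossom by (auto simp: evens_def)
  obtain r where r: "cp s v = cp s (base s B) @ r"
    using cp_through_base[OF B assms(4)] b by auto
  have drop: "dropWhile (\<lambda>w. w \<noteq> base s B) (cp s v) = base s B # r"
    using dropWhile_cp_node_base[OF B _ r[folded b]] v_even b by (simp add: inS_def)
  then have "base s B \<in> set (cp s v)" by (metis list.set_intros(1) set_dropWhileD)
  then show ?thesis using drop r lcp_eq_length[OF v_even] lcp_eq_length[OF b_even] by simp
qed

end
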